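(* Let $(q_n),(r_n)$ be complex sequences vanishing faster than any negative power of $|n|$ as $n\to\pm\infty$ with $1-q_nr_n\neq0$ and $1+q_nr_{n+1}\ne0$ for all $n$, and let $\begin{bmatrix}\bar M_{nm}&M_{nm}\end{bmatrix}$ be as in the context. Writing $[\mathbf v]_1,[\mathbf v]_2$ for the components of a column vector $\mathbf v$, $$q_n=\frac{\sum_{l=n}^\infty[M_{nl}]_1\sum_{k=n}^\infty[M_{nk}]_2}{\sum_{l=n}^\infty[\bar M_{nl}]_1\sum_{k=n}^\infty[M_{nk}]_2-\sum_{l=n}^\infty[M_{nl}]_1\sum_{k=n}^\infty[\bar M_{nk}]_2},$$ $$r_n=\frac{\sum_{l=n-1}^\infty[\bar M_{(n-1)l}]_2}{\sum_{l=n-1}^\infty[M_{(n-1)l}]_2}-\frac{\sum_{l=n}^\infty[\bar M_{nl}]_2}{\sum_{l=n}^\infty[M_{nl}]_2}.$$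
   Context: System (Q): $\begin{bmatrix}\alpha_n\\ \beta_n\end{bmatrix}=\begin{bmatrix} z & (z-z^{-1})q_n\\ z r_n & z^{-1}+(z-z^{-1})q_nr_n\end{bmatrix}\begin{bmatrix}\alpha_{n+1}\\ \beta_{n+1}\end{bmatrix}$, $n\in\mathbb Z$. For $|z|=1$ let $\psi_n$, $\bar\psi_n$ (overbar not complex conjugation) be the solutions with $\psi_n=\begin{bmatrix}o(1)\\ z^n[1+o(1)]\end{bmatrix}$ and $\bar\psi_n=\begin{bmatrix}z^{-n}[1+o(1)]\\ o(1)\end{bmatrix}$ as $n\to+\infty$. Let $K_{nm}:=\frac1{2\pi i}\oint\psi_n z^{-m-1}dz$, $\bar K_{nm}:=\frac1{2\pi i}\oint\bar\psi_n z^{m-1}dz$ (integrals counterclockwise over the unit circle; these are column vectors with $\psi_n=\sum_{l\ge n}K_{nl}z^l$, $\bar\psi_n=\sum_{l\ge n}\bar K_{nl}z^{-l}$). The $2\times2$ matrix $\begin{bmatrix}\bar K_{nn}&K_{nn}\end{bmatrix}$ is invertible and $\begin{bmatrix}\bar M_{nm}&M_{nm}\end{bmatrix}:=\begin{bmatrix}\bar K_{nn}&K_{nn}\end{bmatrix}^{-1}\begin{bmatrix}\bar K_{nm}&K_{nm}\end{bmatrix}$ for $m\ge n$. (These $M,\bar M$ are the solution of the discrete Marchenko system of (Q).) *)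

theory Defs
  imports "HOL-Complex_Analysis.Complex_Analysis"
begin

text \<open>Column vectors in C^2 are represented as pairs; [v]_1 = fst v, [v]_2 = snd v.\<close>

definition Q_step ::
  "(int \<Rightarrow> complex) \<Rightarrow> (int \<Rightarrow> complex) \<Rightarrow> int \<Rightarrow> complex \<Rightarrow> complex \<times> complex \<Rightarrow> complex \<times> complex"
  where "Q_step q r n z v =
    (z * fst v + (z - inverse z) * q n * snd v,
     z * r n * fst v + (inverse z + (z - inverse z) * q n * r n) * snd v)"

definition solves_Q ::
  "(int \<Rightarrow> complex) \<Rightarrow> (int \<Rightarrow> complex) \<Rightarrow> complex \<Rightarrow> (int \<Rightarrow> complex \<times> complex) \<Rightarrow> bool"
  where "solves_Q q r z \<phi> \<longleftrightarrow> (\<forall>n. \<phi> n = Q_step q r n z (\<phi> (n + 1)))"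

definition rapidly_decreasing :: "(int \<Rightarrow> complex) \<Rightarrow> bool"
  where "rapidly_decreasing x \<longleftrightarrow>
    (\<forall>k::nat. ((\<lambda>n. of_int \<bar>n\<bar> ^ k * x n) \<longlongrightarrow> 0) at_top \<and>
              ((\<lambda>n. of_int \<bar>n\<bar> ^ k * x n) \<longlongrightarrow> 0) at_bot)"

definition jost_psi_asym :: "complex \<Rightarrow> (int \<Rightarrow> complex \<times> complex) \<Rightarrow> bool"
  where "jost_psi_asym z \<phi> \<longleftrightarrow>
    ((\<lambda>n. fst (\<phi> n)) \<longlongrightarrow> 0) at_top \<and>
    ((\<lambda>n. snd (\<phi> n) / z powi n) \<longlongrightarrow> 1) at_top"

definition jost_psibar_asym :: "complex \<Rightarrow> (int \<Rightarrow> complex \<times> complex) \<Rightarrow> bool"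
  where "jost_psibar_asym z \<phi> \<longleftrightarrow>
    ((\<lambda>n. fst (\<phi> n) / z powi (- n)) \<longlongrightarrow> 1) at_top \<and>
    ((\<lambda>n. snd (\<phi> n)) \<longlongrightarrow> 0) at_top"

definition circ_coeff :: "(complex \<Rightarrow> complex \<times> complex) \<Rightarrow> complex \<times> complex"
  where "circ_coeff f =
    (contour_integral (circlepath 0 1) (\<lambda>z. fst (f z)) / (2 * pi * \<i>),
     contour_integral (circlepath 0 1) (\<lambda>z. snd (f z)) / (2 * pi * \<i>))"

definition Kker :: "(int \<Rightarrow> complex \<Rightarrow> complex \<times> complex) \<Rightarrow> int \<Rightarrow> int \<Rightarrow> complex \<times> complex"
  where "Kker \<psi> n m = circ_coeff (\<lambda>z. (fst (\<psi> n z) * z powi (- m - 1), snd (\<psi> n z) * z powi (- m - 1)))"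

definition Kbker :: "(int \<Rightarrow> complex \<Rightarrow> complex \<times> complex) \<Rightarrow> int \<Rightarrow> int \<Rightarrow> complex \<times> complex"
  where "Kbker \<psi>b n m = circ_coeff (\<lambda>z. (fst (\<psi>b n z) * z powi (m - 1), snd (\<psi>b n z) * z powi (m - 1)))"

definition solve2 :: "complex \<times> complex \<Rightarrow> complex \<times> complex \<Rightarrow> complex \<times> complex \<Rightarrow> complex \<times> complex"
  where "solve2 a b v =
    (let d = fst a * snd b - snd a * fst b
     in ((snd b * fst v - fst b * snd v) / d, (fst a * snd v - snd a * fst v) / d))"

text \<open>[Mbar_nm M_nm] = [Kbar_nn K_nn]^{-1} [Kbar_nm K_nm]\<close>
definition Mker :: "(int \<Rightarrow> complex \<Rightarrow> complex \<times> complex) \<Rightarrow> (int \<Rightarrow> complex \<Rightarrow> complex \<times> complex) \<Rightarrow> int \<Rightarrow> int \<Rightarrow> complex \<times> complex"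
  where "Mker \<psi> \<psi>b n m = solve2 (Kbker \<psi>b n n) (Kker \<psi> n n) (Kker \<psi> n m)"

definition Mbker :: "(int \<Rightarrow> complex \<Rightarrow> complex \<times> complex) \<Rightarrow> (int \<Rightarrow> complex \<Rightarrow> complex \<times> complex) \<Rightarrow> int \<Rightarrow> int \<Rightarrow> complex \<times> complex"
  where "Mbker \<psi> \<psi>b n m = solve2 (Kbker \<psi>b n n) (Kker \<psi> n n) (Kbker \<psi>b n m)"

definition tailsum :: "(int \<Rightarrow> complex) \<Rightarrow> int \<Rightarrow> complex"
  where "tailsum x n = (\<Sum>j. x (n + int j))"

end

theory Submission
  imports Defs
begin

text \<open>
  The Jost solutions are constructed explicitly as psi_n(z) = z^n SUM_k c(n,k) z^(2k) and
  psibar_n(z) = z^(-n) SUM_k cbar(n,k) z^(-2k). Substituting into (Q) gives discrete Volterra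
  equations for the coefficient sequences c(n,-) and cbar(n,-), solved by iteration from n = +oo;
  an inverse-square decay of q and r suffices for convergence in l^1. The transfer matrix has
  determinant 1, so Wronskians of solutions are constant, and comparing them at +oo shows that
  every solution with the Jost asymptotics is one of these. Hence K(n,n+j) = c(n,j/2) for even j
  and K(n,n+j) = 0 for odd j, and likewise for Kbar.

  Summing a kernel over m evaluates the generating function at z^2 = 1, where (Q) degenerates:
  SUM_m K(n,m) = (0,1) and SUM_m Kbar(n,m) = (1,R_n) with R_(n-1) = r_(n-1) + R_n. The leading
  coefficients have the shape K(n,n) = (-q_n b, (1 - q_n r_n) b) and Kbar(n,n) = (C, r_n C), where
  b and C tend to 1 and obey multiplicative recursions with factors 1 - q_m r_m and
  1 + q_m r_(m+1), so they never vanish. Inverting [Kbar(n,n) K(n,n)] explicitly gives both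
  formulas.
\<close>

section \<open>Inverse-square weights\<close>

definition soft_sgn :: "int \<Rightarrow> real" where
  "soft_sgn m = of_int m / (of_int \<bar>m\<bar> + 1)"

text \<open>The increments of \<open>soft_sgn\<close> dominate \<open>1 / (1 + m\<^sup>2)\<close> up to a factor 3 and telescope,
  which gives bounds on tails of inverse-square-dominated series that are uniform in the
  starting index.\<close>

definition sgn_step :: "int \<Rightarrow> real" where
  "sgn_step m = soft_sgn (m + 1) - soft_sgn m"

lemma inverse_square_le_sgn_step: "1 / (1 + (of_int m)\<^sup>2) \<le> 3 * sgn_step m"
proof -
  have le_of_le: "1 / (1 + x\<^sup>2) \<le> 3 * (1 / P)" if "0 < P" "P \<le> 3 * (1 + x\<^sup>2)" for P x :: real
  proof -
    have "0 < 1 + x\<^sup>2" by (simp add: add_pos_nonneg)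
    then have "1 / (1 + x\<^sup>2) = 3 / (3 * (1 + x\<^sup>2))" by (simp add: field_simps)
    also have "\<dots> \<le> 3 / P" using that by (intro frac_le) auto
    finally show ?thesis by simp
  qed
  obtain P where P: "sgn_step m = 1 / P" "0 < P" "P \<le> 3 * (1 + (of_int m)\<^sup>2)"
  proof (cases "m \<ge> 0")
    case True
    have "(2 * of_int m - 1) * (of_int m - 1) \<ge> (0 :: real)"
      using True by (cases "m = 0") (auto intro: mult_nonneg_nonneg)
    then have "(of_int m + 1) * (of_int m + 2) \<le> 3 * (1 + (of_int m :: real)\<^sup>2)"
      by (simp add: algebra_simps power2_eq_square)
    moreover have "sgn_step m = 1 / ((of_int m + 1) * (of_int m + 2))"
      using True by (simp add: sgn_step_def soft_sgn_def field_simps)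
    ultimately show thesis using True by (intro that) auto
  next
    case False
    have "of_int m * (2 * of_int m + 1) \<ge> (0 :: real)"
      using False by (intro mult_nonpos_nonpos) auto
    then have "- of_int m * (1 - of_int m) \<le> 3 * (1 + (of_int m :: real)\<^sup>2)"
      by (simp add: algebra_simps power2_eq_square)
    moreover have "\<bar>m\<bar> = - m" "\<bar>m + 1\<bar> = - m - 1" using False by auto
    then have "sgn_step m = 1 / (- of_int m * (1 - of_int m))"
      using False by (simp add: sgn_step_def soft_sgn_def field_simps)
    moreover have "0 < - of_int m * (1 - of_int m :: real)" using False by (intro mult_pos_pos) auto
    ultimately show thesis by (intro that) auto
  qed
  then show ?thesis using le_of_le[OF P(2,3)] by simp
qed

lemma sgn_step_pos: "0 < sgn_step m"
proof -
  have "0 < 1 / (1 + (of_int m :: real)\<^sup>2)" by (simp add: add_pos_nonneg)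
  then show ?thesis using inverse_square_le_sgn_step[of m] by linarith
qed

lemma abs_soft_sgn_less_1: "\<bar>soft_sgn m\<bar> < 1"
proof -
  have "\<bar>soft_sgn m\<bar> = \<bar>of_int m\<bar> / (of_int \<bar>m\<bar> + 1)"
    by (simp add: soft_sgn_def abs_divide)
  then show ?thesis by simp
qed

lemma sum_sgn_step: "(\<Sum>i<j. sgn_step (n + int i)) = soft_sgn (n + int j) - soft_sgn n"
proof (induction j)
  case (Suc j)
  have "n + int (Suc j) = (n + int j) + 1" by simp
  then show ?case using Suc by (simp add: sgn_step_def ac_simps)
qed simp

lemma tendsto_one_minus_soft_sgn: "((\<lambda>n. 1 - soft_sgn n) \<longlongrightarrow> 0) at_top"
proof -
  have "filterlim (\<lambda>n::int. of_int n + 1 :: real) at_top at_top"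
    using filterlim_tendsto_add_at_top[OF tendsto_const filterlim_real_of_int_at_top] by (simp add: add.commute)
  then have "((\<lambda>n::int. 1 / (of_int n + 1 :: real)) \<longlongrightarrow> 0) at_top"
    by (intro tendsto_divide_0[OF tendsto_const] filterlim_at_top_imp_at_infinity)
  moreover have "eventually (\<lambda>n. 1 / (of_int n + 1) = 1 - soft_sgn n) at_top"
    unfolding eventually_at_top_linorder by (intro exI[of _ 0]) (auto simp: soft_sgn_def field_simps)
  ultimately show ?thesis by (rule Lim_transform_eventually)
qed

lemma sgn_step_dominated:
  fixes f :: "int \<Rightarrow> real"
  assumes nonneg: "\<And>m. 0 \<le> f m" and dominated: "\<And>m. f m \<le> E * sgn_step m"
  shows "(\<Prod>i<j. 1 + f (n + int i)) \<le> exp (2 * E)"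
    and "summable (\<lambda>i. f (n + int i))"
    and "(\<Sum>i. f (n + int i)) \<le> E * (1 - soft_sgn n)"
proof -
  have "0 \<le> E * sgn_step 0" using nonneg[of 0] dominated[of 0] by linarith
  then have "0 \<le> E" using sgn_step_pos[of 0] by (simp add: zero_le_mult_iff)
  have partial: "(\<Sum>i<j. f (n + int i)) \<le> E * (1 - soft_sgn n)" for j
  proof -
    have "(\<Sum>i<j. f (n + int i)) \<le> (\<Sum>i<j. E * sgn_step (n + int i))" by (intro sum_mono dominated)
    also have "\<dots> = E * (soft_sgn (n + int j) - soft_sgn n)" by (simp add: sum_distrib_left[symmetric] sum_sgn_step)
    also have "\<dots> \<le> E * (1 - soft_sgn n)"
      using abs_soft_sgn_less_1[of "n + int j"] \<open>0 \<le> E\<close> by (intro mult_left_mono) auto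
    finally show ?thesis .
  qed
  have "E * (1 - soft_sgn n) \<le> E * 2"
    using abs_soft_sgn_less_1[of n] \<open>0 \<le> E\<close> by (intro mult_left_mono) auto
  then have "(\<Prod>i<j. 1 + f (n + int i)) \<le> exp (\<Sum>i<j. f (n + int i))"
    "exp (\<Sum>i<j. f (n + int i)) \<le> exp (2 * E)"
    using partial[of j] by (auto intro: prod_le_exp_sum nonneg)
  then show "(\<Prod>i<j. 1 + f (n + int i)) \<le> exp (2 * E)" by linarith
  show summable: "summable (\<lambda>i. f (n + int i))"
    by (rule summableI_nonneg_bounded[where x="E * (1 - soft_sgn n)"]) (use nonneg partial in auto)
  show "(\<Sum>i. f (n + int i)) \<le> E * (1 - soft_sgn n)"
    by (rule suminf_le_const[OF summable]) (use partial in auto)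
qed

lemma bounded_if_tendsto_0_at_top_at_bot:
  fixes f :: "int \<Rightarrow> 'a::real_normed_vector"
  assumes "(f \<longlongrightarrow> 0) at_top" "(f \<longlongrightarrow> 0) at_bot"
  shows "\<exists>C. \<forall>m. norm (f m) \<le> C"
proof -
  obtain N1 where N1: "\<And>m. m \<ge> N1 \<Longrightarrow> norm (f m) < 1"
    using tendstoD[OF assms(1), of 1] by (auto simp: eventually_at_top_linorder)
  obtain N2 where N2: "\<And>m. m \<le> N2 \<Longrightarrow> norm (f m) < 1"
    using tendstoD[OF assms(2), of 1] by (auto simp: eventually_at_bot_linorder)
  have "norm (f m) \<le> 1 + (\<Sum>m\<in>{N2..N1}. norm (f m))" for m
  proof (cases "m \<in> {N2..N1}")
    case True
    then have "norm (f m) \<le> (\<Sum>m\<in>{N2..N1}. norm (f m))" by (intro member_le_sum) auto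
    then show ?thesis by linarith
  next
    case False
    then have "norm (f m) < 1" using N1 N2 by fastforce
    moreover have "0 \<le> (\<Sum>m\<in>{N2..N1}. norm (f m))" by (simp add: sum_nonneg)
    ultimately show ?thesis by linarith
  qed
  then show ?thesis by blast
qed

lemma rapidly_decreasing_weighted_bound:
  assumes "rapidly_decreasing q"
  obtains C where "\<And>m. (1 + (of_int m)\<^sup>2) * cmod (q m) \<le> C"
proof -
  let ?f = "\<lambda>n. of_int \<bar>n\<bar> ^ 0 * q n + of_int \<bar>n\<bar> ^ 2 * q n"
  have "((\<lambda>n. of_int \<bar>n\<bar> ^ k * q n) \<longlongrightarrow> 0) F" if "F = at_top \<or> F = at_bot" for k F
    using assms that unfolding rapidly_decreasing_def by blast
  then have "(?f \<longlongrightarrow> 0 + 0) at_top" "(?f \<longlongrightarrow> 0 + 0) at_bot"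
    by (intro tendsto_add; blast)+
  then have "(?f \<longlongrightarrow> 0) at_top" "(?f \<longlongrightarrow> 0) at_bot" by simp_all
  then obtain C where C: "\<And>m. cmod (?f m) \<le> C" using bounded_if_tendsto_0_at_top_at_bot by blast
  have "cmod (?f m) = (1 + (of_int m)\<^sup>2) * cmod (q m)" for m
  proof -
    have "(of_int \<bar>m\<bar> ^ 2 :: complex) = of_int (m ^ 2)" by (metis of_int_power power2_abs)
    then have "?f m = of_real (1 + (of_int m)\<^sup>2) * q m" by (simp add: algebra_simps)
    then show ?thesis by (simp only: norm_mult norm_of_real) (simp add: add_pos_nonneg)
  qed
  then show ?thesis using C that by metis
qed

section \<open>Coefficient sequences and generating functions\<close>

type_synonym cseq = "nat \<Rightarrow> complex \<times> complex"

definition norm1 :: "complex \<times> complex \<Rightarrow> real" where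
  "norm1 v = cmod (fst v) + cmod (snd v)"

definition trunc_norm :: "nat \<Rightarrow> cseq \<Rightarrow> real" where
  "trunc_norm K x = (\<Sum>k<K. norm1 (x k))"

lemma norm1_nonneg: "0 \<le> norm1 v"
  by (simp add: norm1_def)

lemma norm1_triangle: "norm1 (v + w) \<le> norm1 v + norm1 w"
  using norm_triangle_ineq[of "fst v" "fst w"] norm_triangle_ineq[of "snd v" "snd w"]
  by (simp add: norm1_def)

lemma norm1_minus_commute: "norm1 (v - w) = norm1 (w - v)"
  by (simp add: norm1_def norm_minus_commute)

lemma norm1_uminus: "norm1 (- v) = norm1 v"
  by (simp add: norm1_def)

lemma norm1_eq_0_iff: "norm1 v = 0 \<longleftrightarrow> v = 0"
  by (cases v) (auto simp: norm1_def add_nonneg_eq_0_iff zero_prod_def)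

lemma norm_le_norm1: "norm v \<le> norm1 v"
proof -
  have "norm v = sqrt ((cmod (fst v))\<^sup>2 + (cmod (snd v))\<^sup>2)"
    by (cases v) (simp add: norm_Pair)
  also have "\<dots> \<le> \<bar>cmod (fst v)\<bar> + \<bar>cmod (snd v)\<bar>" by (rule sqrt_sum_squares_le_sum_abs)
  finally show ?thesis by (simp add: norm1_def)
qed

lemma norm1_le_trunc_norm: "k < K \<Longrightarrow> norm1 (x k) \<le> trunc_norm K x"
  unfolding trunc_norm_def by (rule member_le_sum) (auto simp: norm1_nonneg)

lemma trunc_norm_triangle: "trunc_norm K (\<lambda>k. x k + y k) \<le> trunc_norm K x + trunc_norm K y"
  unfolding trunc_norm_def sum.distrib[symmetric] by (intro sum_mono norm1_triangle)

lemma trunc_norm_minus_commute: "trunc_norm K (\<lambda>k. x k - y k) = trunc_norm K (\<lambda>k. y k - x k)"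
  by (simp add: trunc_norm_def norm1_minus_commute)

lemma trunc_norm_zero [simp]: "trunc_norm K (\<lambda>k. 0) = 0"
  by (simp add: trunc_norm_def norm1_def)

lemma tendsto_trunc_norm:
  assumes "\<And>k. (\<lambda>m. X m k) \<longlonglongrightarrow> x k"
  shows "(\<lambda>m. trunc_norm K (X m)) \<longlonglongrightarrow> trunc_norm K x"
  unfolding trunc_norm_def norm1_def
  by (intro tendsto_sum tendsto_add tendsto_norm tendsto_fst tendsto_snd assms)

definition seq_shift :: "(nat \<Rightarrow> complex) \<Rightarrow> nat \<Rightarrow> complex" where
  "seq_shift a k = (if k = 0 then 0 else a (k - 1))"

definition delta_seq :: "complex \<times> complex \<Rightarrow> cseq" where
  "delta_seq v = (\<lambda>k. if k = 0 then v else 0)"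

definition l1_seq :: "cseq \<Rightarrow> bool" where
  "l1_seq x \<longleftrightarrow> summable (\<lambda>k. norm1 (x k))"

definition gen_fun :: "cseq \<Rightarrow> complex \<Rightarrow> complex \<times> complex" where
  "gen_fun x w = ((\<Sum>k. fst (x k) * w ^ k), (\<Sum>k. snd (x k) * w ^ k))"

lemma sum_norm_seq_shift_le: "(\<Sum>k<K. cmod (seq_shift a k)) \<le> (\<Sum>k<K. cmod (a k))"
proof (cases K)
  case (Suc K')
  have "(\<Sum>k<Suc K'. cmod (seq_shift a k)) = (\<Sum>k<K'. cmod (a k))"
    by (subst sum.lessThan_Suc_shift) (simp add: seq_shift_def)
  also have "\<dots> \<le> (\<Sum>k<Suc K'. cmod (a k))" by (intro sum_mono2) auto
  finally show ?thesis using Suc by simp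
qed simp

lemma summable_norm_mult_power:
  assumes "summable (\<lambda>k. cmod (a k))" "cmod w \<le> 1"
  shows "summable (\<lambda>k. norm (a k * w ^ k))"
proof (rule summable_comparison_test[OF _ assms(1)])
  have "cmod (a k) * cmod w ^ k \<le> cmod (a k)" for k
    using assms(2) by (simp add: mult_left_le power_le_one)
  then show "\<exists>N. \<forall>k\<ge>N. norm (norm (a k * w ^ k)) \<le> cmod (a k)"
    by (simp add: norm_mult norm_power)
qed

lemma norm_suminf_mult_power_le:
  assumes "summable (\<lambda>k. cmod (a k))" "cmod w \<le> 1"
  shows "cmod (\<Sum>k. a k * w ^ k) \<le> (\<Sum>k. cmod (a k))"
proof -
  have "cmod (\<Sum>k. a k * w ^ k) \<le> (\<Sum>k. norm (a k * w ^ k))"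
    by (rule summable_norm[OF summable_norm_mult_power[OF assms]])
  also have "\<dots> \<le> (\<Sum>k. cmod (a k))"
    using assms by (intro suminf_le summable_norm_mult_power)
      (auto simp: norm_mult norm_power mult_left_le power_le_one)
  finally show ?thesis .
qed

lemma sums_seq_shift_mult_power:
  assumes "summable (\<lambda>k. a k * w ^ k)"
  shows "(\<lambda>k. seq_shift a k * w ^ k) sums (w * (\<Sum>k. a k * w ^ k))"
proof -
  have "(\<lambda>k. w * (a k * w ^ k)) sums (w * (\<Sum>k. a k * w ^ k))"
    by (rule sums_mult[OF summable_sums[OF assms]])
  then have "(\<lambda>k. seq_shift a (Suc k) * w ^ Suc k) sums (w * (\<Sum>k. a k * w ^ k))"
    by (simp add: seq_shift_def mult_ac)
  then show ?thesis by (subst (asm) sums_Suc_iff) (simp add: seq_shift_def)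
qed

lemma l1_seq_iff:
  "l1_seq x \<longleftrightarrow> summable (\<lambda>k. cmod (fst (x k))) \<and> summable (\<lambda>k. cmod (snd (x k)))"
proof
  assume "l1_seq x"
  then show "summable (\<lambda>k. cmod (fst (x k))) \<and> summable (\<lambda>k. cmod (snd (x k)))"
    unfolding l1_seq_def norm1_def
    by (auto intro: summable_comparison_test[where g="\<lambda>k. cmod (fst (x k)) + cmod (snd (x k))"])
qed (simp add: l1_seq_def norm1_def summable_add)

lemma summable_gen_fun:
  assumes "l1_seq x" "cmod w \<le> 1"
  shows "summable (\<lambda>k. fst (x k) * w ^ k)" and "summable (\<lambda>k. snd (x k) * w ^ k)"
  using assms by (auto simp: l1_seq_iff intro: summable_norm_cancel summable_norm_mult_power)

lemma delta_seq_0 [simp]: "delta_seq v 0 = v"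
  by (simp add: delta_seq_def)

lemma l1_seq_delta: "l1_seq (delta_seq v)"
proof -
  have "(\<lambda>k. norm1 (delta_seq v k)) = (\<lambda>k. if k = 0 then norm1 v else 0)"
    by (auto simp: delta_seq_def norm1_def)
  then show ?thesis by (simp add: l1_seq_def)
qed

lemma l1_seq_diff: "l1_seq x \<Longrightarrow> l1_seq y \<Longrightarrow> l1_seq (\<lambda>k. x k - y k)"
proof -
  have "summable (\<lambda>k. cmod (f k - g k))" if "summable (\<lambda>k. cmod (f k))" "summable (\<lambda>k. cmod (g k))"
    for f g :: "nat \<Rightarrow> complex"
    by (rule summable_comparison_test[OF _ summable_add[OF that]]) (auto intro: norm_triangle_ineq4)
  then show "l1_seq x \<Longrightarrow> l1_seq y \<Longrightarrow> l1_seq (\<lambda>k. x k - y k)"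
    by (simp add: l1_seq_iff)
qed

lemma l1_seq_if_l1_seq_diff: "l1_seq (\<lambda>k. x k - y k) \<Longrightarrow> l1_seq y \<Longrightarrow> l1_seq x"
  using l1_seq_diff[of "\<lambda>k. x k - y k" "\<lambda>k. - y k"] by (simp add: l1_seq_def norm1_uminus)

lemma gen_fun_delta [simp]: "gen_fun (delta_seq v) w = v"
proof -
  have "(\<lambda>k. fst (delta_seq v k) * w ^ k) = (\<lambda>k. if k = 0 then fst v else 0)"
    "(\<lambda>k. snd (delta_seq v k) * w ^ k) = (\<lambda>k. if k = 0 then snd v else 0)"
    by (auto simp: delta_seq_def fun_eq_iff)
  then show ?thesis
    using sums_unique[OF sums_single[of 0 "\<lambda>_. fst v"]] sums_unique[OF sums_single[of 0 "\<lambda>_. snd v"]]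
    by (simp add: gen_fun_def)
qed

lemma gen_fun_diff:
  assumes "l1_seq x" "l1_seq y" "cmod w \<le> 1"
  shows "gen_fun (\<lambda>k. x k - y k) w = gen_fun x w - gen_fun y w"
  using suminf_diff[OF summable_gen_fun(1)[OF assms(1,3)] summable_gen_fun(1)[OF assms(2,3)]]
    suminf_diff[OF summable_gen_fun(2)[OF assms(1,3)] summable_gen_fun(2)[OF assms(2,3)]]
  by (simp add: gen_fun_def left_diff_distrib)

lemma norm1_gen_fun_le:
  assumes "l1_seq x" "cmod w \<le> 1"
  shows "norm1 (gen_fun x w) \<le> (\<Sum>k. norm1 (x k))"
proof -
  have s: "summable (\<lambda>k. cmod (fst (x k)))" "summable (\<lambda>k. cmod (snd (x k)))"
    using assms(1) by (auto simp: l1_seq_iff)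
  have "(\<Sum>k. norm1 (x k)) = (\<Sum>k. cmod (fst (x k))) + (\<Sum>k. cmod (snd (x k)))"
    unfolding norm1_def by (rule suminf_add[OF s, symmetric])
  then show ?thesis
    using norm_suminf_mult_power_le[OF s(1) assms(2)] norm_suminf_mult_power_le[OF s(2) assms(2)]
    by (simp add: norm1_def gen_fun_def)
qed

lemma sums_gen_fun_1:
  assumes "l1_seq x"
  shows "(\<lambda>k. fst (x k)) sums fst (gen_fun x 1)" and "(\<lambda>k. snd (x k)) sums snd (gen_fun x 1)"
  using summable_gen_fun[OF assms, of 1] by (simp_all add: gen_fun_def summable_sums)

section \<open>Discrete Volterra equations\<close>

text \<open>A discrete Volterra equation \<open>c n = T n (c (n + 1))\<close> with \<open>c n \<approx> u\<close> as \<open>n \<rightarrow> \<infinity>\<close>, for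
  operators \<open>T n\<close> that almost fix \<open>u\<close> and are isometries up to summable errors \<open>e n\<close>.
  Its solution is the Neumann-type limit of the iterates \<open>T n (T (n + 1) (\<dots> u))\<close>; norms are
  only ever taken of finitely many coefficients, which postpones all summability questions.\<close>

locale volterra_chain =
  fixes T :: "int \<Rightarrow> cseq \<Rightarrow> cseq" and u :: cseq and e :: "int \<Rightarrow> real" and B :: real
  assumes T_diff: "\<And>n x y. T n (\<lambda>k. x k - y k) = (\<lambda>k. T n x k - T n y k)"
    and trunc_norm_T_le: "\<And>n K x. trunc_norm K (T n x) \<le> (1 + e n) * trunc_norm K x"
    and trunc_norm_T_u_le: "\<And>n K. trunc_norm K (\<lambda>k. T n u k - u k) \<le> e n"
    and e_nonneg: "\<And>n. 0 \<le> e n"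
    and prod_e_le: "\<And>n j. (\<Prod>i<j. 1 + e (n + int i)) \<le> B"
    and summable_e: "\<And>n. summable (\<lambda>i. e (n + int i))"
begin

primrec iter :: "nat \<Rightarrow> int \<Rightarrow> cseq" where
  "iter 0 n = u"
| "iter (Suc j) n = T n (iter j (n + 1))"

definition incr :: "nat \<Rightarrow> int \<Rightarrow> cseq" where
  "incr j n = (\<lambda>k. iter (Suc j) n k - iter j n k)"

definition limit :: "int \<Rightarrow> cseq" where
  "limit n k = u k + (\<Sum>i. incr i n k)"

definition tail :: "int \<Rightarrow> nat \<Rightarrow> real" where
  "tail n j = (\<Sum>i. e (n + int j + int i))"

lemma one_le_B: "1 \<le> B"
  using prod_e_le[of _ 0] by simp

lemma incr_Suc: "incr (Suc j) n = T n (incr j (n + 1))"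
  by (simp add: incr_def T_diff)

lemma trunc_norm_incr_le: "trunc_norm K (incr j n) \<le> B * e (n + int j)"
proof -
  have "trunc_norm K (incr j n) \<le> (\<Prod>i<j. 1 + e (n + int i)) * e (n + int j)"
  proof (induction j arbitrary: n)
    case 0
    then show ?case using trunc_norm_T_u_le by (simp add: incr_def)
  next
    case (Suc j)
    have "trunc_norm K (incr (Suc j) n) \<le> (1 + e n) * trunc_norm K (incr j (n + 1))"
      unfolding incr_Suc by (rule trunc_norm_T_le)
    also have "\<dots> \<le> (1 + e n) * ((\<Prod>i<j. 1 + e (n + 1 + int i)) * e (n + 1 + int j))"
      using Suc[of "n + 1"] e_nonneg[of n] by (intro mult_left_mono) auto
    also have "\<dots> = (\<Prod>i<Suc j. 1 + e (n + int i)) * e (n + int (Suc j))"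
      by (simp del: prod.lessThan_Suc add: prod.lessThan_Suc_shift ac_simps)
    finally show ?case .
  qed
  also have "\<dots> \<le> B * e (n + int j)"
    using prod_e_le e_nonneg by (intro mult_right_mono) auto
  finally show ?thesis .
qed

lemma iter_eq_sum_incr: "iter j n k = u k + (\<Sum>i<j. incr i n k)"
  by (induction j) (auto simp: incr_def)

lemma summable_incr: "summable (\<lambda>i. incr i n k)"
proof (rule summable_comparison_test)
  show "summable (\<lambda>i. B * e (n + int i))"
    using summable_e by (rule summable_mult)
  have "norm (incr i n k) \<le> B * e (n + int i)" for i
    using norm_le_norm1[of "incr i n k"] norm1_le_trunc_norm[of k "Suc k" "incr i n"]
      trunc_norm_incr_le[of "Suc k" i n]
    by linarith
  then show "\<exists>N. \<forall>i\<ge>N. norm (incr i n k) \<le> B * e (n + int i)" by blast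
qed

lemma iter_tendsto_limit: "(\<lambda>j. iter j n k) \<longlonglongrightarrow> limit n k"
  unfolding iter_eq_sum_incr limit_def
  by (intro tendsto_add tendsto_const summable_LIMSEQ summable_incr)

lemma tail_tendsto_0: "(\<lambda>j. tail n j) \<longlonglongrightarrow> 0"
proof -
  have "(\<lambda>j. \<Sum>i. e (n + int (i + j))) \<longlonglongrightarrow> 0"
    using summable_e by (rule suminf_exist_split2)
  then show ?thesis
    by (simp add: tail_def ac_simps)
qed

lemma sum_e_le_tail: "(\<Sum>i\<in>{j..<m}. e (n + int i)) \<le> tail n j"
proof (cases "j \<le> m")
  case True
  have "(\<Sum>i\<in>{j..<m}. e (n + int i)) = (\<Sum>i<m - j. e (n + int j + int i))"
    using True by (intro sum.reindex_bij_witness[of _ "\<lambda>i. i + j" "\<lambda>i. i - j"]) (auto simp: ac_simps)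
  also have "\<dots> \<le> tail n j"
    unfolding tail_def by (intro sum_le_suminf summable_e e_nonneg) auto
  finally show ?thesis .
next
  case False
  then show ?thesis
    unfolding tail_def by (simp add: suminf_nonneg summable_e e_nonneg)
qed

lemma trunc_norm_iter_diff_le:
  "j \<le> m \<Longrightarrow> trunc_norm K (\<lambda>k. iter m n k - iter j n k) \<le> B * (\<Sum>i\<in>{j..<m}. e (n + int i))"
proof (induction m)
  case (Suc m)
  show ?case
  proof (cases "j = Suc m")
    case False
    then have "j \<le> m" using Suc.prems by simp
    have "(\<lambda>k. iter (Suc m) n k - iter j n k) = (\<lambda>k. incr m n k + (iter m n k - iter j n k))"
      by (simp add: incr_def del: iter.simps)
    then have "trunc_norm K (\<lambda>k. iter (Suc m) n k - iter j n k)
        \<le> trunc_norm K (incr m n) + trunc_norm K (\<lambda>k. iter m n k - iter j n k)"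
      using trunc_norm_triangle[of K "incr m n"] by simp
    also have "\<dots> \<le> B * e (n + int m) + B * (\<Sum>i\<in>{j..<m}. e (n + int i))"
      using trunc_norm_incr_le Suc.IH[OF \<open>j \<le> m\<close>] by (intro add_mono)
    also have "\<dots> = B * (\<Sum>i\<in>{j..<Suc m}. e (n + int i))"
      using \<open>j \<le> m\<close> by (simp add: algebra_simps)
    finally show ?thesis .
  qed simp
qed simp

lemma trunc_norm_limit_iter_le: "trunc_norm K (\<lambda>k. limit n k - iter j n k) \<le> B * tail n j"
proof (rule LIMSEQ_le_const2)
  show "(\<lambda>m. trunc_norm K (\<lambda>k. iter m n k - iter j n k)) \<longlonglongrightarrow> trunc_norm K (\<lambda>k. limit n k - iter j n k)"
    by (intro tendsto_trunc_norm tendsto_diff iter_tendsto_limit tendsto_const)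
  have "trunc_norm K (\<lambda>k. iter m n k - iter j n k) \<le> B * tail n j" if "j \<le> m" for m
    using trunc_norm_iter_diff_le[OF that] sum_e_le_tail one_le_B
    by (meson dual_order.trans mult_left_mono zero_le_one)
  then show "\<exists>N. \<forall>m\<ge>N. trunc_norm K (\<lambda>k. iter m n k - iter j n k) \<le> B * tail n j"
    by blast
qed

lemma limit_eq_T_limit: "limit n = T n (limit (n + 1))"
proof
  fix k
  let ?d = "\<lambda>k. limit n k - T n (limit (n + 1)) k"
  have bound: "trunc_norm (Suc k) ?d \<le> B * tail n (Suc j) + (1 + e n) * (B * tail (n + 1) j)" for j
  proof -
    \<comment> \<open>as \<open>iter (Suc j) n = T n (iter j (n + 1))\<close>, the defect splits into two tails\<close>
    have "?d = (\<lambda>k. (limit n k - iter (Suc j) n k) + T n (\<lambda>k. iter j (n + 1) k - limit (n + 1) k) k)"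
      by (simp add: T_diff)
    then have "trunc_norm (Suc k) ?d \<le> trunc_norm (Suc k) (\<lambda>k. limit n k - iter (Suc j) n k)
        + trunc_norm (Suc k) (T n (\<lambda>k. iter j (n + 1) k - limit (n + 1) k))"
      by (simp add: trunc_norm_triangle)
    also have "\<dots> \<le> B * tail n (Suc j) + (1 + e n) * trunc_norm (Suc k) (\<lambda>k. limit (n + 1) k - iter j (n + 1) k)"
      by (intro add_mono trunc_norm_limit_iter_le) (metis trunc_norm_T_le trunc_norm_minus_commute)
    also have "\<dots> \<le> B * tail n (Suc j) + (1 + e n) * (B * tail (n + 1) j)"
      using e_nonneg[of n] by (intro add_left_mono mult_left_mono trunc_norm_limit_iter_le) auto
    finally show ?thesis .
  qed
  have "(\<lambda>j. B * tail n (Suc j) + (1 + e n) * (B * tail (n + 1) j)) \<longlonglongrightarrow> B * 0 + (1 + e n) * (B * 0)"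
    by (intro tendsto_add tendsto_mult tendsto_const tail_tendsto_0 LIMSEQ_Suc)
  then have "trunc_norm (Suc k) ?d \<le> 0"
    using bound by (intro LIMSEQ_le_const) auto
  then have "norm1 (?d k) = 0"
    using norm1_le_trunc_norm[of k "Suc k" ?d] norm1_nonneg[of "?d k"] by linarith
  then show "limit n k = T n (limit (n + 1)) k"
    by (simp add: norm1_eq_0_iff)
qed

lemma trunc_norm_limit_u_le: "trunc_norm K (\<lambda>k. limit n k - u k) \<le> B * tail n 0"
  using trunc_norm_limit_iter_le[of K n 0] by simp

lemma summable_norm1_limit_u: "summable (\<lambda>k. norm1 (limit n k - u k))"
  by (rule summableI_nonneg_bounded[where x="B * tail n 0"])
    (use trunc_norm_limit_u_le norm1_nonneg in \<open>auto simp: trunc_norm_def\<close>)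

lemma suminf_norm1_limit_u_le: "(\<Sum>k. norm1 (limit n k - u k)) \<le> B * tail n 0"
  by (rule suminf_le_const[OF summable_norm1_limit_u])
    (use trunc_norm_limit_u_le in \<open>auto simp: trunc_norm_def\<close>)

lemma tendsto_limit_at_top:
  assumes "l1_seq u" and tail: "((\<lambda>n. tail n 0) \<longlongrightarrow> 0) at_top"
  shows "l1_seq (limit n)"
    and "cmod w \<le> 1 \<Longrightarrow> ((\<lambda>n. gen_fun (limit n) w) \<longlongrightarrow> gen_fun u w) at_top"
    and "((\<lambda>n. limit n 0) \<longlongrightarrow> u 0) at_top"
proof -
  have l1: "l1_seq (limit n)" for n
    using summable_norm1_limit_u assms(1) l1_seq_if_l1_seq_diff by (auto simp: l1_seq_def)
  then show "l1_seq (limit n)" .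
  have to_0: "((\<lambda>n. B * tail n 0) \<longlongrightarrow> 0) at_top"
    using tendsto_mult_right_zero[OF tail] .
  show "((\<lambda>n. gen_fun (limit n) w) \<longlongrightarrow> gen_fun u w) at_top" if "cmod w \<le> 1"
  proof -
    have "norm (gen_fun (limit n) w - gen_fun u w) \<le> B * tail n 0" for n
    proof -
      have "gen_fun (limit n) w - gen_fun u w = gen_fun (\<lambda>k. limit n k - u k) w"
        using gen_fun_diff[OF l1 assms(1) that] by simp
      then have "norm (gen_fun (limit n) w - gen_fun u w) \<le> (\<Sum>k. norm1 (limit n k - u k))"
        using norm_le_norm1 norm1_gen_fun_le[OF l1_seq_diff[OF l1 assms(1)] that] by (metis order_trans)
      then show ?thesis using suminf_norm1_limit_u_le[of n] by linarith
    qed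
    then show ?thesis
      by (intro Lim_null_comparison[OF always_eventually to_0, THEN LIM_zero_cancel]) auto
  qed
  have "norm (limit n 0 - u 0) \<le> B * tail n 0" for n
    using norm_le_norm1[of "limit n 0 - u 0"] norm1_le_trunc_norm[of 0 1 "\<lambda>k. limit n k - u k"]
      trunc_norm_limit_u_le[of 1 n] by linarith
  then show "((\<lambda>n. limit n 0) \<longlongrightarrow> u 0) at_top"
    by (intro Lim_null_comparison[OF always_eventually to_0, THEN LIM_zero_cancel]) auto
qed

end

section \<open>The coefficient recursions of system (Q)\<close>

text \<open>Substituting psi_n(z) = z^n c_n(z^2) into (Q) gives the coefficient recursion
  c_n = psi_step q r n c_(n+1), and psibar_n(z) = z^(-n) c_n(z^(-2)) gives psibar_step (see
  Q_step_eq_step_vec and gen_fun_step).\<close>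

definition step_vec :: "complex \<Rightarrow> complex \<Rightarrow> complex \<Rightarrow> complex \<Rightarrow> complex \<Rightarrow> complex \<times> complex" where
  "step_vec q r s t b = (s + q * (t - b), b + r * (s + q * (t - b)))"

definition psi_step :: "(int \<Rightarrow> complex) \<Rightarrow> (int \<Rightarrow> complex) \<Rightarrow> int \<Rightarrow> cseq \<Rightarrow> cseq" where
  "psi_step q r n x = (\<lambda>k. step_vec (q n) (r n)
     (seq_shift (\<lambda>k. fst (x k)) k) (seq_shift (\<lambda>k. snd (x k)) k) (snd (x k)))"

definition psibar_step :: "(int \<Rightarrow> complex) \<Rightarrow> (int \<Rightarrow> complex) \<Rightarrow> int \<Rightarrow> cseq \<Rightarrow> cseq" where
  "psibar_step q r n x = (\<lambda>k. step_vec (q n) (r n)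
     (fst (x k)) (snd (x k)) (seq_shift (\<lambda>k. snd (x k)) k))"

definition step_defect :: "complex \<Rightarrow> complex \<Rightarrow> real" where
  "step_defect q r = 2 * cmod q + cmod r + 2 * cmod q * cmod r"

lemma Q_step_eq_step_vec: "Q_step q r n z v = step_vec (q n) (r n) (z * fst v) (z * snd v) (snd v / z)"
  by (simp add: Q_step_def step_vec_def divide_inverse algebra_simps)

lemma step_vec_scale:
  "step_vec q r (c * s) (c * t) (c * b) = (c * fst (step_vec q r s t b), c * snd (step_vec q r s t b))"
  by (simp add: step_vec_def algebra_simps)

lemma step_defect_nonneg: "0 \<le> step_defect q r"
  by (simp add: step_defect_def)

lemma norm1_step_vec_le:
  "norm1 (step_vec q r s t b)
     \<le> (1 + cmod r) * cmod s + (cmod q + cmod q * cmod r) * (cmod t + cmod b) + cmod b"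
proof -
  let ?a = "s + q * (t - b)"
  have a: "cmod ?a \<le> cmod s + cmod q * (cmod t + cmod b)"
    using norm_triangle_ineq[of s "q * (t - b)"] norm_triangle_ineq4[of t b]
    by (simp add: norm_mult) (meson add_left_mono mult_left_mono norm_ge_zero order_trans)
  have "norm1 (step_vec q r s t b) = cmod ?a + cmod (b + r * ?a)"
    by (simp add: step_vec_def norm1_def)
  also have "\<dots> \<le> (1 + cmod r) * cmod ?a + cmod b"
    using norm_triangle_ineq[of b "r * ?a"] by (simp only: norm_mult distrib_right mult_1)
  also have "\<dots> \<le> (1 + cmod r) * (cmod s + cmod q * (cmod t + cmod b)) + cmod b"
    using a by (intro add_right_mono mult_left_mono) auto
  finally show ?thesis by (simp add: algebra_simps)
qed

lemma trunc_norm_step_vec_le: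
  assumes "(\<Sum>k<K. cmod (s k)) \<le> (\<Sum>k<K. cmod (fst (x k)))"
    and "(\<Sum>k<K. cmod (t k)) \<le> (\<Sum>k<K. cmod (snd (x k)))"
    and "(\<Sum>k<K. cmod (b k)) \<le> (\<Sum>k<K. cmod (snd (x k)))"
  shows "trunc_norm K (\<lambda>k. step_vec q r (s k) (t k) (b k)) \<le> (1 + step_defect q r) * trunc_norm K x"
proof -
  let ?S = "\<lambda>f. \<Sum>k<K. cmod (f k)" and ?c = "cmod q + cmod q * cmod r"
  have "trunc_norm K (\<lambda>k. step_vec q r (s k) (t k) (b k))
      \<le> (\<Sum>k<K. (1 + cmod r) * cmod (s k) + ?c * (cmod (t k) + cmod (b k)) + cmod (b k))"
    unfolding trunc_norm_def by (intro sum_mono norm1_step_vec_le)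
  also have "\<dots> = (1 + cmod r) * ?S s + ?c * (?S t + ?S b) + ?S b"
    by (simp only: sum.distrib sum_distrib_left distrib_left)
  also have "\<dots> \<le> (1 + cmod r) * ?S (\<lambda>k. fst (x k)) + ?c * (2 * ?S (\<lambda>k. snd (x k))) + ?S (\<lambda>k. snd (x k))"
    using assms by (intro add_mono mult_left_mono) auto
  also have "\<dots> \<le> (1 + step_defect q r) * (?S (\<lambda>k. fst (x k)) + ?S (\<lambda>k. snd (x k)))"
    by (simp add: step_defect_def algebra_simps sum_nonneg mult_right_mono)
  also have "\<dots> = (1 + step_defect q r) * trunc_norm K x"
    by (simp add: trunc_norm_def norm1_def sum.distrib)
  finally show ?thesis .
qed

lemma trunc_norm_psi_step_le: "trunc_norm K (psi_step q r n x) \<le> (1 + step_defect (q n) (r n)) * trunc_norm K x"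
  unfolding psi_step_def by (intro trunc_norm_step_vec_le sum_norm_seq_shift_le order_refl)

lemma trunc_norm_psibar_step_le: "trunc_norm K (psibar_step q r n x) \<le> (1 + step_defect (q n) (r n)) * trunc_norm K x"
  unfolding psibar_step_def by (intro trunc_norm_step_vec_le sum_norm_seq_shift_le order_refl)

lemma trunc_norm_le_if_vanishing:
  assumes "\<And>k. N \<le> k \<Longrightarrow> x k = 0"
  shows "trunc_norm K x \<le> trunc_norm N x"
proof -
  have "trunc_norm K x = (\<Sum>k<min K N. norm1 (x k))"
    unfolding trunc_norm_def using assms by (intro sum.mono_neutral_right) (auto simp: norm1_def)
  also have "\<dots> \<le> trunc_norm N x"
    unfolding trunc_norm_def by (intro sum_mono2) (auto simp: norm1_nonneg)
  finally show ?thesis .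
qed

lemma trunc_norm_psi_step_delta:
  "trunc_norm K (\<lambda>k. psi_step q r n (delta_seq (0, 1)) k - delta_seq (0, 1) k) \<le> step_defect (q n) (r n)"
proof -
  have "trunc_norm K (\<lambda>k. psi_step q r n (delta_seq (0, 1)) k - delta_seq (0, 1) k)
      \<le> trunc_norm 2 (\<lambda>k. psi_step q r n (delta_seq (0, 1)) k - delta_seq (0, 1) k)"
    by (intro trunc_norm_le_if_vanishing) (simp add: psi_step_def step_vec_def seq_shift_def delta_seq_def zero_prod_def)
  also have "\<dots> = 2 * (cmod (q n) + cmod (q n) * cmod (r n))"
    by (simp add: trunc_norm_def numeral_2_eq_2 lessThan_Suc psi_step_def step_vec_def seq_shift_def
        delta_seq_def norm1_def norm_mult algebra_simps)
  also have "\<dots> \<le> step_defect (q n) (r n)"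
    by (simp add: step_defect_def)
  finally show ?thesis .
qed

lemma trunc_norm_psibar_step_delta:
  "trunc_norm K (\<lambda>k. psibar_step q r n (delta_seq (1, 0)) k - delta_seq (1, 0) k) \<le> step_defect (q n) (r n)"
proof -
  have "trunc_norm K (\<lambda>k. psibar_step q r n (delta_seq (1, 0)) k - delta_seq (1, 0) k)
      \<le> trunc_norm 1 (\<lambda>k. psibar_step q r n (delta_seq (1, 0)) k - delta_seq (1, 0) k)"
    by (intro trunc_norm_le_if_vanishing) (simp add: psibar_step_def step_vec_def seq_shift_def delta_seq_def zero_prod_def)
  also have "\<dots> = cmod (r n)"
    by (simp add: trunc_norm_def psibar_step_def step_vec_def seq_shift_def delta_seq_def norm1_def)
  also have "\<dots> \<le> step_defect (q n) (r n)"
    by (simp add: step_defect_def)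
  finally show ?thesis .
qed

lemma gen_fun_step:
  assumes "l1_seq x" "cmod w \<le> 1"
  shows "gen_fun (psi_step q r n x) w
           = step_vec (q n) (r n) (w * fst (gen_fun x w)) (w * snd (gen_fun x w)) (snd (gen_fun x w))"
    and "gen_fun (psibar_step q r n x) w
           = step_vec (q n) (r n) (fst (gen_fun x w)) (snd (gen_fun x w)) (w * snd (gen_fun x w))"
proof -
  define a b where "a = (\<lambda>k. fst (x k))" and "b = (\<lambda>k. snd (x k))"
  have sa: "(\<lambda>k. a k * w ^ k) sums fst (gen_fun x w)" and sb: "(\<lambda>k. b k * w ^ k) sums snd (gen_fun x w)"
    using summable_gen_fun[OF assms] by (auto simp: a_def b_def gen_fun_def summable_sums)
  have ssa: "(\<lambda>k. seq_shift a k * w ^ k) sums (w * fst (gen_fun x w))"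
    and ssb: "(\<lambda>k. seq_shift b k * w ^ k) sums (w * snd (gen_fun x w))"
    using sums_seq_shift_mult_power summable_gen_fun[OF assms] by (auto simp: a_def b_def gen_fun_def)
  have step_sums: "(\<lambda>k. fst (step_vec (q n) (r n) (s k) (t k) (c k)) * w ^ k) sums fst (step_vec (q n) (r n) S T C)
      \<and> (\<lambda>k. snd (step_vec (q n) (r n) (s k) (t k) (c k)) * w ^ k) sums snd (step_vec (q n) (r n) S T C)"
    if "(\<lambda>k. s k * w ^ k) sums S" "(\<lambda>k. t k * w ^ k) sums T" "(\<lambda>k. c k * w ^ k) sums C" for s t c S T C
  proof -
    have "(\<lambda>k. fst (step_vec (q n) (r n) (s k) (t k) (c k)) * w ^ k)
        = (\<lambda>k. s k * w ^ k + q n * (t k * w ^ k - c k * w ^ k))"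
      "(\<lambda>k. snd (step_vec (q n) (r n) (s k) (t k) (c k)) * w ^ k)
        = (\<lambda>k. c k * w ^ k + r n * (s k * w ^ k + q n * (t k * w ^ k - c k * w ^ k)))"
      by (simp_all add: step_vec_def fun_eq_iff algebra_simps)
    then show ?thesis
      by (simp add: step_vec_def) (intro conjI sums_add sums_diff sums_mult that)
  qed
  show "gen_fun (psi_step q r n x) w
      = step_vec (q n) (r n) (w * fst (gen_fun x w)) (w * snd (gen_fun x w)) (snd (gen_fun x w))"
    using step_sums[OF ssa ssb sb] unfolding gen_fun_def psi_step_def a_def b_def
    by (simp add: sums_iff prod_eq_iff)
  show "gen_fun (psibar_step q r n x) w
      = step_vec (q n) (r n) (fst (gen_fun x w)) (snd (gen_fun x w)) (w * snd (gen_fun x w))"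
    using step_sums[OF sa sb ssb] unfolding gen_fun_def psibar_step_def a_def b_def
    by (simp add: sums_iff prod_eq_iff)
qed

lemma psi_step_diff: "psi_step q r n (\<lambda>k. x k - y k) = (\<lambda>k. psi_step q r n x k - psi_step q r n y k)"
  by (simp add: psi_step_def step_vec_def seq_shift_def algebra_simps fun_eq_iff)

lemma psibar_step_diff: "psibar_step q r n (\<lambda>k. x k - y k) = (\<lambda>k. psibar_step q r n x k - psibar_step q r n y k)"
  by (simp add: psibar_step_def step_vec_def seq_shift_def algebra_simps fun_eq_iff)

lemma step_defect_le_sgn_step:
  assumes "rapidly_decreasing q" "rapidly_decreasing r"
  obtains E where "\<And>m. step_defect (q m) (r m) \<le> E * sgn_step m"
proof -
  obtain Cq Cr where Cq: "\<And>m. (1 + (of_int m)\<^sup>2) * cmod (q m) \<le> Cq"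
    and Cr: "\<And>m. (1 + (of_int m)\<^sup>2) * cmod (r m) \<le> Cr"
    using rapidly_decreasing_weighted_bound assms by metis
  have r_le: "cmod (r m) \<le> Cr" for m
    using Cr[of m] mult_right_mono[of 1 "1 + (of_int m)\<^sup>2" "cmod (r m)"] by simp
  have "cmod (q 0) \<le> Cq"
    using Cq[of 0] by simp
  then have "0 \<le> Cq"
    by (rule order_trans[OF norm_ge_zero])
  define C where "C = 2 * Cq + Cr + 2 * (Cq * Cr)"
  have "step_defect (q m) (r m) \<le> 3 * C * sgn_step m" for m
  proof -
    let ?w = "1 + (of_int m :: real)\<^sup>2"
    have "0 < ?w" by (simp add: add_pos_nonneg)
    have "?w * step_defect (q m) (r m)
        = 2 * (?w * cmod (q m)) + ?w * cmod (r m) + 2 * ((?w * cmod (q m)) * cmod (r m))"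
      by (simp add: step_defect_def algebra_simps)
    also have "\<dots> \<le> C"
      unfolding C_def using \<open>0 \<le> Cq\<close> by (intro add_mono mult_left_mono mult_mono Cq Cr r_le) auto
    finally have weighted: "?w * step_defect (q m) (r m) \<le> C" .
    then have "0 \<le> C"
      using \<open>0 < ?w\<close> step_defect_nonneg[of "q m" "r m"] by (meson mult_nonneg_nonneg less_imp_le order_trans)
    have "step_defect (q m) (r m) \<le> C * (1 / ?w)"
      using weighted \<open>0 < ?w\<close> by (simp add: field_simps mult.commute)
    also have "\<dots> \<le> C * (3 * sgn_step m)"
      using inverse_square_le_sgn_step[of m] \<open>0 \<le> C\<close> by (intro mult_left_mono) auto
    finally show ?thesis by simp
  qed
  then show ?thesis by (rule that)
qed

section \<open>Wronskians\<close>

definition wronskian :: "complex \<times> complex \<Rightarrow> complex \<times> complex \<Rightarrow> complex" where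
  "wronskian u v = fst u * snd v - snd u * fst v"

lemma wronskian_Q_step: "z \<noteq> 0 \<Longrightarrow> wronskian (Q_step q r n z u) (Q_step q r n z v) = wronskian u v"
  by (simp add: wronskian_def Q_step_def field_simps)

lemma eventually_at_top_if_step:
  fixes P :: "int \<Rightarrow> bool"
  assumes "P n" "\<And>m. P m \<Longrightarrow> P (m + 1)"
  shows "eventually P at_top"
  unfolding eventually_at_top_linorder using assms by (auto intro: int_ge_induct)

lemma eq_limit_if_shift_invariant:
  fixes f :: "int \<Rightarrow> 'a::t2_space"
  assumes "\<And>m. f m = f (m + 1)" and "(f \<longlongrightarrow> L) at_top"
  shows "f n = L"
proof -
  have "eventually (\<lambda>m. f m = f n) at_top"
    using assms(1) by (intro eventually_at_top_if_step) auto
  then have "(f \<longlongrightarrow> f n) at_top"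
    by (rule tendsto_eventually)
  then show ?thesis
    using assms(2) by (rule tendsto_unique[OF trivial_limit_at_top_linorder])
qed

lemma wronskian_eq_limit:
  assumes "solves_Q q r z u" "solves_Q q r z v" "z \<noteq> 0"
    and "((\<lambda>m. wronskian (u m) (v m)) \<longlongrightarrow> L) at_top"
  shows "wronskian (u n) (v n) = L"
proof (rule eq_limit_if_shift_invariant[where f="\<lambda>m. wronskian (u m) (v m)"])
  show "wronskian (u m) (v m) = wronskian (u (m + 1)) (v (m + 1))" for m
    using assms(1,2) wronskian_Q_step[OF assms(3)] by (metis solves_Q_def)
qed (rule assms(4))

lemma eq_if_wronskian_eq_0:
  assumes "wronskian x y = 0" "wronskian x v = wronskian y v" "wronskian y v \<noteq> 0"
  shows "x = y"
proof -
  have "fst x * wronskian y v = wronskian x v * fst y" "snd x * wronskian y v = wronskian x v * snd y"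
    using assms(1) unfolding wronskian_def by (auto simp: algebra_simps)
  then show ?thesis
    using assms(2,3) by (simp add: prod_eq_iff)
qed

lemma solution_eq_if_wronskian_limits:
  assumes "solves_Q q r z u" "solves_Q q r z v" "solves_Q q r z w" "z \<noteq> 0"
    and "((\<lambda>m. wronskian (u m) (v m)) \<longlongrightarrow> 0) at_top"
    and "((\<lambda>m. wronskian (u m) (w m)) \<longlongrightarrow> L) at_top"
    and "((\<lambda>m. wronskian (v m) (w m)) \<longlongrightarrow> L) at_top" "L \<noteq> 0"
  shows "u n = v n"
proof (rule eq_if_wronskian_eq_0)
  show "wronskian (u n) (v n) = 0" "wronskian (u n) (w n) = wronskian (v n) (w n)" "wronskian (v n) (w n) \<noteq> 0"
    using wronskian_eq_limit[OF assms(1,2,4,5)] wronskian_eq_limit[OF assms(1,3,4,6)]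
      wronskian_eq_limit[OF assms(2,3,4,7)] assms(8) by auto
qed

lemma tendsto_unimodular_mult_zero:
  fixes c f g :: "'a \<Rightarrow> complex"
  assumes "(f \<longlongrightarrow> 0) F" "(g \<longlongrightarrow> b) F" "\<And>m. cmod (c m) = 1"
  shows "((\<lambda>m. c m * f m * g m) \<longlongrightarrow> 0) F"
proof -
  have "((\<lambda>m. f m * g m) \<longlongrightarrow> 0 * b) F"
    by (intro tendsto_mult assms)
  moreover have "norm (c m * f m * g m) = norm (f m * g m)" for m
    using assms(3) by (simp add: norm_mult)
  ultimately have "((\<lambda>m. norm (c m * f m * g m)) \<longlongrightarrow> 0) F"
    using tendsto_norm_zero[of "\<lambda>m. f m * g m"] by simp
  then show ?thesis
    by (simp add: tendsto_norm_zero_iff)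
qed

lemma nonzero_if_tendsto_1:
  fixes f :: "int \<Rightarrow> complex"
  assumes "(f \<longlongrightarrow> 1) at_top" and "\<And>m. f m = c m * f (m + 1)" and "\<And>m. c m \<noteq> 0"
  shows "f n \<noteq> 0"
proof
  assume "f n = 0"
  moreover have "f (m + 1) = 0" if "f m = 0" for m
    using that assms(2,3)[of m] by simp
  ultimately have "eventually (\<lambda>m. f m = 0) at_top"
    by (rule eventually_at_top_if_step)
  then have "(f \<longlongrightarrow> 0) at_top"
    by (rule tendsto_eventually)
  from tendsto_unique[OF trivial_limit_at_top_linorder this assms(1)] show False
    by simp
qed

section \<open>Fourier coefficients and the Marchenko kernels\<close>

lemma has_contour_integral_powi_circlepath:
  "((\<lambda>z::complex. z powi p) has_contour_integral (if p = -1 then 2 * pi * \<i> else 0)) (circlepath 0 1)"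
proof (cases "p = -1")
  case True
  have "((\<lambda>u. 1 / (u - 0)) has_contour_integral (2 * of_real pi * \<i> * 1)) (circlepath 0 1)"
    using Cauchy_integral_circlepath_simple[of "\<lambda>_. 1" 0 1 0] by simp
  then show ?thesis
    using True by (simp add: power_int_minus divide_inverse)
next
  case False
  have "((\<lambda>z::complex. z powi p) has_contour_integral 0) (circlepath 0 1)"
  proof (rule Cauchy_theorem_primitive[where S="- {0}" and f="\<lambda>z. z powi (p + 1) / of_int (p + 1)"])
    fix x :: complex
    assume "x \<in> - {0}"
    moreover have "complex_of_int p + 1 \<noteq> 0"
      using False by (metis of_int_1 of_int_add of_int_eq_0_iff add_eq_0_iff2)
    ultimately show "((\<lambda>z. z powi (p + 1) / of_int (p + 1)) has_field_derivative x powi p) (at x within - {0})"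
      by (auto intro!: derivative_eq_intros)
  qed (auto simp: path_image_circlepath)
  then show ?thesis
    using False by simp
qed

lemma contour_integral_circlepath_laurent:
  fixes a :: "nat \<Rightarrow> complex" and \<sigma> :: "nat \<Rightarrow> int"
  assumes summable: "summable (\<lambda>k. cmod (a k))"
  shows "contour_integral (circlepath 0 1) (\<lambda>z. (\<Sum>k. a k * z powi \<sigma> k) * z powi p)
     = 2 * pi * \<i> * (\<Sum>k. if \<sigma> k + p = -1 then a k else 0)"
proof -
  define f where "f N z = (\<Sum>k<N. a k * z powi (\<sigma> k + p))" for N z
  define l where "l z = (\<Sum>k. a k * z powi (\<sigma> k + p))" for z
  have "(f N has_contour_integral (\<Sum>k<N. a k * (if \<sigma> k + p = -1 then 2 * pi * \<i> else 0))) (circlepath 0 1)"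
    for N
    unfolding f_def by (intro has_contour_integral_sum has_contour_integral_lmul has_contour_integral_powi_circlepath) auto
  then have f: "(f N has_contour_integral 2 * pi * \<i> * (\<Sum>k<N. if \<sigma> k + p = -1 then a k else 0)) (circlepath 0 1)"
    for N
    by (simp add: sum_distrib_left if_distrib mult.commute cong: if_cong)
  have "uniform_limit (sphere 0 1) f l sequentially"
    unfolding f_def l_def
    by (rule Weierstrass_m_test[OF _ summable]) (simp add: norm_mult norm_power_int)
  then have "(\<lambda>N. contour_integral (circlepath 0 1) (f N)) \<longlonglongrightarrow> contour_integral (circlepath 0 1) l"
    using f by (intro contour_integral_uniform_limit_circlepath(2)) (auto intro!: always_eventually
        has_contour_integral_integrable)
  moreover have "(\<lambda>N. contour_integral (circlepath 0 1) (f N))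
      \<longlonglongrightarrow> 2 * pi * \<i> * (\<Sum>k. if \<sigma> k + p = -1 then a k else 0)"
    unfolding contour_integral_unique[OF f]
    by (intro tendsto_mult tendsto_const summable_LIMSEQ summable_comparison_test[OF _ summable]) auto
  ultimately have "contour_integral (circlepath 0 1) l = 2 * pi * \<i> * (\<Sum>k. if \<sigma> k + p = -1 then a k else 0)"
    by (rule LIMSEQ_unique)
  moreover have "contour_integral (circlepath 0 1) (\<lambda>z. (\<Sum>k. a k * z powi \<sigma> k) * z powi p)
      = contour_integral (circlepath 0 1) l"
  proof (rule contour_integral_eq)
    fix z assume "z \<in> path_image (circlepath 0 1)"
    then have "cmod z = 1" "z \<noteq> 0" by auto
    have "summable (\<lambda>k. a k * z powi \<sigma> k)"
      by (rule summable_comparison_test[OF _ summable]) (auto simp: norm_mult norm_power_int \<open>cmod z = 1\<close>)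
    then show "(\<Sum>k. a k * z powi \<sigma> k) * z powi p = l z"
      unfolding l_def using \<open>z \<noteq> 0\<close> by (simp add: suminf_mult2 power_int_add mult.assoc)
  qed
  ultimately show ?thesis by simp
qed

lemma contour_integral_circlepath_even_coeff:
  fixes a :: "nat \<Rightarrow> complex" and s :: int
  assumes "summable (\<lambda>k. cmod (a k))" "s = 1 \<or> s = -1"
  shows "contour_integral (circlepath 0 1) (\<lambda>z. (\<Sum>k. a k * z powi (s * (2 * int k))) * z powi (- s * int j - 1))
           / (2 * pi * \<i>) = (if even j then a (j div 2) else 0)"
proof -
  have "s * (2 * int k) + (- s * int j - 1) = -1 \<longleftrightarrow> k = j div 2 \<and> even j" for k
    using assms(2) by (auto; presburger)
  then have "(\<lambda>k. if s * (2 * int k) + (- s * int j - 1) = -1 then a k else 0)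
      = (\<lambda>k. if k = j div 2 then (if even j then a k else 0) else 0)"
    by auto
  then show ?thesis
    using contour_integral_circlepath_laurent[OF assms(1), of "\<lambda>k. s * (2 * int k)" "- s * int j - 1"]
      sums_unique[OF sums_single[of "j div 2" "\<lambda>k. if even j then a k else 0"]]
    by simp
qed

lemma sums_even_spread:
  assumes "f sums s"
  shows "(\<lambda>j. if even j then f (j div 2) else 0) sums s"
proof -
  have "strict_mono (\<lambda>k::nat. 2 * k)" by (simp add: strict_mono_def)
  moreover have "odd j" if "j \<notin> range (\<lambda>k::nat. 2 * k)" for j :: nat
    using that by auto
  ultimately show ?thesis
    using sums_mono_reindex[of "\<lambda>k. 2 * k" "\<lambda>j. if even j then f (j div 2) else 0" s] assms by auto
qed

lemma solve2_sums:
  assumes "(\<lambda>j. fst (V j)) sums fst v" "(\<lambda>j. snd (V j)) sums snd v"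
  shows "(\<lambda>j. fst (solve2 a b (V j))) sums fst (solve2 a b v)"
    and "(\<lambda>j. snd (solve2 a b (V j))) sums snd (solve2 a b v)"
  unfolding solve2_def Let_def fst_conv snd_conv
  by (intro sums_divide sums_diff sums_mult assms)+

lemma solve2_reconstruction:
  fixes C b q r R :: complex
  assumes "C \<noteq> 0" "b \<noteq> 0"
  defines "X \<equiv> solve2 (C, r * C) (- q * b, (1 - q * r) * b) (0, 1)"
    and "Y \<equiv> solve2 (C, r * C) (- q * b, (1 - q * r) * b) (1, R)"
  shows "q = fst X * snd X / (fst Y * snd X - fst X * snd Y)" and "snd Y / snd X = R - r"
proof -
  have X: "X = (q / C, 1 / b)" and Y: "Y = ((1 - q * r + q * R) / C, (R - r) / b)"
    using assms by (simp_all add: X_def Y_def solve2_def Let_def field_simps)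
  show "q = fst X * snd X / (fst Y * snd X - fst X * snd Y)" "snd Y / snd X = R - r"
    using assms(1,2) by (simp_all add: X Y field_simps)
qed

section \<open>Jost solutions\<close>

locale inverse_square_potential =
  fixes q r :: "int \<Rightarrow> complex" and E :: real
  assumes step_defect_le: "\<And>n. step_defect (q n) (r n) \<le> E * sgn_step n"
begin

lemmas step_defect_dominated = sgn_step_dominated[OF step_defect_nonneg step_defect_le]

sublocale psi: volterra_chain "psi_step q r" "delta_seq (0, 1)" "\<lambda>n. step_defect (q n) (r n)" "exp (2 * E)"
  by unfold_locales
    (simp_all add: psi_step_diff trunc_norm_psi_step_le trunc_norm_psi_step_delta step_defect_nonneg
      step_defect_dominated)

sublocale psibar: volterra_chain "psibar_step q r" "delta_seq (1, 0)" "\<lambda>n. step_defect (q n) (r n)" "exp (2 * E)"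
  by unfold_locales
    (simp_all add: psibar_step_diff trunc_norm_psibar_step_le trunc_norm_psibar_step_delta step_defect_nonneg
      step_defect_dominated)

lemma tail_defect_tendsto_0: "((\<lambda>n. \<Sum>i. step_defect (q (n + int i)) (r (n + int i))) \<longlongrightarrow> 0) at_top"
proof (rule tendsto_sandwich[OF _ _ tendsto_const])
  show "((\<lambda>n. E * (1 - soft_sgn n)) \<longlongrightarrow> 0) at_top"
    using tendsto_mult_right_zero[OF tendsto_one_minus_soft_sgn] .
qed (auto intro!: always_eventually suminf_nonneg step_defect_nonneg step_defect_dominated)

lemma psi_limit_asymptotics:
  shows "l1_seq (psi.limit n)"
    and "cmod w \<le> 1 \<Longrightarrow> ((\<lambda>n. gen_fun (psi.limit n) w) \<longlongrightarrow> (0, 1)) at_top"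
    and "((\<lambda>n. psi.limit n 0) \<longlongrightarrow> (0, 1)) at_top"
  using psi.tendsto_limit_at_top[OF l1_seq_delta] tail_defect_tendsto_0
  by (simp_all add: psi.tail_def)

lemma psibar_limit_asymptotics:
  shows "l1_seq (psibar.limit n)"
    and "cmod w \<le> 1 \<Longrightarrow> ((\<lambda>n. gen_fun (psibar.limit n) w) \<longlongrightarrow> (1, 0)) at_top"
    and "((\<lambda>n. psibar.limit n 0) \<longlongrightarrow> (1, 0)) at_top"
  using psibar.tendsto_limit_at_top[OF l1_seq_delta] tail_defect_tendsto_0
  by (simp_all add: psibar.tail_def)

definition jost :: "int \<Rightarrow> complex \<Rightarrow> complex \<times> complex" where
  "jost n z = (z powi n * fst (gen_fun (psi.limit n) (z\<^sup>2)), z powi n * snd (gen_fun (psi.limit n) (z\<^sup>2)))"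

definition jost_bar :: "int \<Rightarrow> complex \<Rightarrow> complex \<times> complex" where
  "jost_bar n z = (z powi (- n) * fst (gen_fun (psibar.limit n) ((inverse z)\<^sup>2)),
                   z powi (- n) * snd (gen_fun (psibar.limit n) ((inverse z)\<^sup>2)))"

lemma jost_solves:
  assumes "cmod z = 1"
  shows "solves_Q q r z (\<lambda>n. jost n z)"
  unfolding solves_Q_def
proof
  fix n
  let ?G = "\<lambda>n. gen_fun (psi.limit n) (z\<^sup>2)"
  have "z \<noteq> 0" "cmod (z\<^sup>2) \<le> 1" using assms by (auto simp: norm_power)
  have "?G n = gen_fun (psi_step q r n (psi.limit (n + 1))) (z\<^sup>2)"
    using psi.limit_eq_T_limit[of n] by simp
  also have "\<dots> = step_vec (q n) (r n) (z\<^sup>2 * fst (?G (n + 1))) (z\<^sup>2 * snd (?G (n + 1))) (snd (?G (n + 1)))"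
    by (rule gen_fun_step(1)[OF psi_limit_asymptotics(1) \<open>cmod (z\<^sup>2) \<le> 1\<close>])
  finally have G: "?G n = \<dots>" .
  have p: "z powi (n + 1) = z powi n * z" using \<open>z \<noteq> 0\<close> by (simp add: power_int_add)
  show "jost n z = Q_step q r n z (jost (n + 1) z)"
    unfolding jost_def G step_vec_scale[symmetric] Q_step_eq_step_vec fst_conv snd_conv p
    using \<open>z \<noteq> 0\<close> by (simp add: power2_eq_square mult_ac)
qed

lemma jost_bar_solves:
  assumes "cmod z = 1"
  shows "solves_Q q r z (\<lambda>n. jost_bar n z)"
  unfolding solves_Q_def
proof
  fix n
  let ?H = "\<lambda>n. gen_fun (psibar.limit n) ((inverse z)\<^sup>2)"
  have "z \<noteq> 0" "cmod ((inverse z)\<^sup>2) \<le> 1" using assms by (auto simp: norm_power norm_inverse)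
  have "?H n = gen_fun (psibar_step q r n (psibar.limit (n + 1))) ((inverse z)\<^sup>2)"
    using psibar.limit_eq_T_limit[of n] by simp
  also have "\<dots> = step_vec (q n) (r n) (fst (?H (n + 1))) (snd (?H (n + 1))) ((inverse z)\<^sup>2 * snd (?H (n + 1)))"
    by (rule gen_fun_step(2)[OF psibar_limit_asymptotics(1) \<open>cmod ((inverse z)\<^sup>2) \<le> 1\<close>])
  finally have H: "?H n = \<dots>" .
  have p: "z powi (- (n + 1)) = z powi (- n) * inverse z"
    using \<open>z \<noteq> 0\<close> by (simp add: power_int_diff power_int_minus divide_inverse)
  show "jost_bar n z = Q_step q r n z (jost_bar (n + 1) z)"
    unfolding jost_bar_def H step_vec_scale[symmetric] Q_step_eq_step_vec fst_conv snd_conv p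
    using \<open>z \<noteq> 0\<close> by (simp add: power2_eq_square field_simps)
qed

lemma tendsto_gen_fun_jost:
  assumes "cmod z = 1"
  shows "((\<lambda>m. fst (gen_fun (psi.limit m) (z\<^sup>2))) \<longlongrightarrow> 0) at_top"
    and "((\<lambda>m. snd (gen_fun (psi.limit m) (z\<^sup>2))) \<longlongrightarrow> 1) at_top"
    and "((\<lambda>m. fst (gen_fun (psibar.limit m) ((inverse z)\<^sup>2))) \<longlongrightarrow> 1) at_top"
    and "((\<lambda>m. snd (gen_fun (psibar.limit m) ((inverse z)\<^sup>2))) \<longlongrightarrow> 0) at_top"
proof -
  have "cmod (z\<^sup>2) \<le> 1" "cmod ((inverse z)\<^sup>2) \<le> 1"
    using assms by (simp_all add: norm_power norm_inverse)
  from this[THEN psi_limit_asymptotics(2)] this[THEN psibar_limit_asymptotics(2)] show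
    "((\<lambda>m. fst (gen_fun (psi.limit m) (z\<^sup>2))) \<longlongrightarrow> 0) at_top"
    "((\<lambda>m. snd (gen_fun (psi.limit m) (z\<^sup>2))) \<longlongrightarrow> 1) at_top"
    "((\<lambda>m. fst (gen_fun (psibar.limit m) ((inverse z)\<^sup>2))) \<longlongrightarrow> 1) at_top"
    "((\<lambda>m. snd (gen_fun (psibar.limit m) ((inverse z)\<^sup>2))) \<longlongrightarrow> 0) at_top"
    by (auto dest: tendsto_fst tendsto_snd)
qed

lemma jost_unique:
  assumes z: "cmod z = 1" and u: "solves_Q q r z u" "jost_psi_asym z u"
  shows "u n = jost n z"
proof (rule solution_eq_if_wronskian_limits[OF u(1) jost_solves[OF z] jost_bar_solves[OF z]])
  define G H where "G m = gen_fun (psi.limit m) (z\<^sup>2)" and "H m = gen_fun (psibar.limit m) ((inverse z)\<^sup>2)"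
    for m
  note lims = tendsto_gen_fun_jost[OF z, folded G_def H_def]
  have u1: "((\<lambda>m. fst (u m)) \<longlongrightarrow> 0) at_top" and u2: "((\<lambda>m. snd (u m) / z powi m) \<longlongrightarrow> 1) at_top"
    using u(2) by (auto simp: jost_psi_asym_def)
  show "z \<noteq> 0" using z by auto
  have unimodular: "cmod (z powi m) = 1" "cmod ((z powi m)\<^sup>2) = 1" "cmod (z powi (- m)) = 1" for m
    using z by (simp_all add: norm_power_int norm_power)
  have "wronskian (u m) (jost m z)
      = z powi m * fst (u m) * snd (G m) - (z powi m)\<^sup>2 * fst (G m) * (snd (u m) / z powi m)" for m
    using \<open>z \<noteq> 0\<close> by (simp add: wronskian_def jost_def G_def power2_eq_square)
  moreover have "((\<lambda>m. z powi m * fst (u m) * snd (G m) - (z powi m)\<^sup>2 * fst (G m) * (snd (u m) / z powi m))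
      \<longlongrightarrow> 0 - 0) at_top"
    by (intro tendsto_diff tendsto_unimodular_mult_zero[OF u1 lims(2)] tendsto_unimodular_mult_zero[OF lims(1) u2]
        unimodular)
  ultimately show "((\<lambda>m. wronskian (u m) (jost m z)) \<longlongrightarrow> 0) at_top"
    by simp
  have "wronskian (u m) (jost_bar m z)
      = z powi (- m) * fst (u m) * snd (H m) - snd (u m) / z powi m * fst (H m)" for m
    by (simp add: wronskian_def jost_bar_def H_def power_int_minus divide_inverse)
  moreover have "((\<lambda>m. z powi (- m) * fst (u m) * snd (H m) - snd (u m) / z powi m * fst (H m))
      \<longlongrightarrow> 0 - 1 * 1) at_top"
    by (intro tendsto_diff tendsto_mult tendsto_unimodular_mult_zero[OF u1 lims(4)] u2 lims unimodular)
  ultimately show "((\<lambda>m. wronskian (u m) (jost_bar m z)) \<longlongrightarrow> -1) at_top"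
    by simp
  have "wronskian (jost m z) (jost_bar m z) = fst (G m) * snd (H m) - snd (G m) * fst (H m)" for m
    using \<open>z \<noteq> 0\<close> by (simp add: wronskian_def jost_def jost_bar_def G_def H_def power_int_minus field_simps)
  moreover have "((\<lambda>m. fst (G m) * snd (H m) - snd (G m) * fst (H m)) \<longlongrightarrow> 0 * 0 - 1 * 1) at_top"
    by (intro tendsto_diff tendsto_mult lims)
  ultimately show "((\<lambda>m. wronskian (jost m z) (jost_bar m z)) \<longlongrightarrow> -1) at_top"
    by simp
qed simp

lemma jost_bar_unique:
  assumes z: "cmod z = 1" and u: "solves_Q q r z u" "jost_psibar_asym z u"
  shows "u n = jost_bar n z"
proof (rule solution_eq_if_wronskian_limits[OF u(1) jost_bar_solves[OF z] jost_solves[OF z]])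
  define G H where "G m = gen_fun (psi.limit m) (z\<^sup>2)" and "H m = gen_fun (psibar.limit m) ((inverse z)\<^sup>2)"
    for m
  note lims = tendsto_gen_fun_jost[OF z, folded G_def H_def]
  have u1: "((\<lambda>m. fst (u m) / z powi (- m)) \<longlongrightarrow> 1) at_top" and u2: "((\<lambda>m. snd (u m)) \<longlongrightarrow> 0) at_top"
    using u(2) by (auto simp: jost_psibar_asym_def)
  show "z \<noteq> 0" using z by auto
  have unimodular: "cmod (z powi m) = 1" "cmod ((z powi (- m))\<^sup>2) = 1" "cmod (z powi (- m)) = 1" for m
    using z by (simp_all add: norm_power_int norm_power)
  have "wronskian (u m) (jost_bar m z)
      = (z powi (- m))\<^sup>2 * snd (H m) * (fst (u m) / z powi (- m)) - z powi (- m) * snd (u m) * fst (H m)" for m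
    using \<open>z \<noteq> 0\<close> by (simp add: wronskian_def jost_bar_def H_def power2_eq_square)
  moreover have "((\<lambda>m. (z powi (- m))\<^sup>2 * snd (H m) * (fst (u m) / z powi (- m)) - z powi (- m) * snd (u m) * fst (H m))
      \<longlongrightarrow> 0 - 0) at_top"
    by (intro tendsto_diff tendsto_unimodular_mult_zero[OF lims(4) u1] tendsto_unimodular_mult_zero[OF u2 lims(3)]
        unimodular)
  ultimately show "((\<lambda>m. wronskian (u m) (jost_bar m z)) \<longlongrightarrow> 0) at_top"
    by simp
  have "wronskian (u m) (jost m z)
      = fst (u m) / z powi (- m) * snd (G m) - z powi m * snd (u m) * fst (G m)" for m
    by (simp add: wronskian_def jost_def G_def power_int_minus divide_inverse)
  moreover have "((\<lambda>m. fst (u m) / z powi (- m) * snd (G m) - z powi m * snd (u m) * fst (G m))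
      \<longlongrightarrow> 1 * 1 - 0) at_top"
    by (intro tendsto_diff tendsto_mult tendsto_unimodular_mult_zero[OF u2 lims(1)] u1 lims unimodular)
  ultimately show "((\<lambda>m. wronskian (u m) (jost m z)) \<longlongrightarrow> 1) at_top"
    by simp
  have "wronskian (jost_bar m z) (jost m z) = fst (H m) * snd (G m) - snd (H m) * fst (G m)" for m
    using \<open>z \<noteq> 0\<close> by (simp add: wronskian_def jost_def jost_bar_def G_def H_def power_int_minus field_simps)
  moreover have "((\<lambda>m. fst (H m) * snd (G m) - snd (H m) * fst (G m)) \<longlongrightarrow> 1 * 1 - 0 * 0) at_top"
    by (intro tendsto_diff tendsto_mult lims)
  ultimately show "((\<lambda>m. wronskian (jost_bar m z) (jost m z)) \<longlongrightarrow> 1) at_top"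
    by simp
qed simp

lemma Kker_eq_psi_coeff:
  assumes "\<And>z. cmod z = 1 \<Longrightarrow> \<psi> n z = jost n z"
  shows "Kker \<psi> n (n + int j) = (if even j then psi.limit n (j div 2) else 0)"
proof -
  have "contour_integral (circlepath 0 1) (\<lambda>z. f (\<psi> n z) * z powi (- (n + int j) - 1)) / (2 * pi * \<i>)
      = (if even j then f (psi.limit n (j div 2)) else 0)" if f: "f = fst \<or> f = snd" for f
  proof -
    have "contour_integral (circlepath 0 1) (\<lambda>z. f (\<psi> n z) * z powi (- (n + int j) - 1))
        = contour_integral (circlepath 0 1)
            (\<lambda>z. (\<Sum>k. f (psi.limit n k) * z powi (1 * (2 * int k))) * z powi (- 1 * int j - 1))"
    proof (rule contour_integral_eq)
      fix z assume "z \<in> path_image (circlepath 0 1)"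
      then have "cmod z = 1" "z \<noteq> 0" by auto
      have "(z\<^sup>2) ^ k = z powi (2 * int k)" for k
        by (metis power_int_of_nat power_mult of_nat_mult of_nat_numeral)
      moreover have "z powi n * z powi (- (n + int j) - 1) = z powi (- int j - 1)"
        using \<open>z \<noteq> 0\<close> by (simp add: power_int_add[symmetric])
      ultimately show "f (\<psi> n z) * z powi (- (n + int j) - 1)
          = (\<Sum>k. f (psi.limit n k) * z powi (1 * (2 * int k))) * z powi (- 1 * int j - 1)"
        using f assms[OF \<open>cmod z = 1\<close>] by (auto simp: jost_def gen_fun_def ac_simps)
    qed
    then show ?thesis
      using f psi_limit_asymptotics(1)[of n] contour_integral_circlepath_even_coeff[of "\<lambda>k. f (psi.limit n k)" 1 j]
      by (auto simp: l1_seq_iff)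
  qed
  from this[of fst] this[of snd] show ?thesis
    by (cases "even j") (simp_all add: Kker_def circ_coeff_def zero_prod_def)
qed

lemma Kbker_eq_psibar_coeff:
  assumes "\<And>z. cmod z = 1 \<Longrightarrow> \<psi>b n z = jost_bar n z"
  shows "Kbker \<psi>b n (n + int j) = (if even j then psibar.limit n (j div 2) else 0)"
proof -
  have "contour_integral (circlepath 0 1) (\<lambda>z. f (\<psi>b n z) * z powi (n + int j - 1)) / (2 * pi * \<i>)
      = (if even j then f (psibar.limit n (j div 2)) else 0)" if f: "f = fst \<or> f = snd" for f
  proof -
    have "contour_integral (circlepath 0 1) (\<lambda>z. f (\<psi>b n z) * z powi (n + int j - 1))
        = contour_integral (circlepath 0 1)
            (\<lambda>z. (\<Sum>k. f (psibar.limit n k) * z powi (- 1 * (2 * int k))) * z powi (- (- 1) * int j - 1))"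
    proof (rule contour_integral_eq)
      fix z assume "z \<in> path_image (circlepath 0 1)"
      then have "cmod z = 1" "z \<noteq> 0" by auto
      have "((inverse z)\<^sup>2) ^ k = z powi (- 1 * (2 * int k))" for k
        by (metis power_int_of_nat power_mult of_nat_mult of_nat_numeral power_int_minus power_inverse
            mult_minus1)
      moreover have "z powi (- n) * z powi (n + int j - 1) = z powi (int j - 1)"
        using \<open>z \<noteq> 0\<close> by (simp add: power_int_add[symmetric])
      ultimately show "f (\<psi>b n z) * z powi (n + int j - 1)
          = (\<Sum>k. f (psibar.limit n k) * z powi (- 1 * (2 * int k))) * z powi (- (- 1) * int j - 1)"
        using f assms[OF \<open>cmod z = 1\<close>] by (auto simp: jost_bar_def gen_fun_def ac_simps)
    qed
    then show ?thesis
      using f psibar_limit_asymptotics(1)[of n] contour_integral_circlepath_even_coeff[of "\<lambda>k. f (psibar.limit n k)" "- 1" j]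
      by (auto simp: l1_seq_iff)
  qed
  from this[of fst] this[of snd] show ?thesis
    by (cases "even j") (simp_all add: Kbker_def circ_coeff_def zero_prod_def)
qed

lemma gen_fun_limit_at_1:
  shows "gen_fun (psi.limit n) 1 = (0, 1)"
    and "fst (gen_fun (psibar.limit n) 1) = 1"
    and "snd (gen_fun (psibar.limit n) 1) = r n + snd (gen_fun (psibar.limit (n + 1)) 1)"
proof -
  have step_at_1: "step_vec q r s t t = (s, t + r * s)" for q r s t :: complex
    by (simp add: step_vec_def)
  define X Y where "X m = gen_fun (psi.limit m) 1" and "Y m = gen_fun (psibar.limit m) 1" for m
  have X: "X m = (fst (X (m + 1)), snd (X (m + 1)) + r m * fst (X (m + 1)))"
    and Y: "Y m = (fst (Y (m + 1)), snd (Y (m + 1)) + r m * fst (Y (m + 1)))" for m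
    using gen_fun_step(1)[OF psi_limit_asymptotics(1), of 1] gen_fun_step(2)[OF psibar_limit_asymptotics(1), of 1]
      psi.limit_eq_T_limit[of m] psibar.limit_eq_T_limit[of m]
    by (simp_all add: X_def Y_def step_at_1)
  have X_lim: "((\<lambda>m. fst (X m)) \<longlongrightarrow> 0) at_top" "((\<lambda>m. snd (X m)) \<longlongrightarrow> 1) at_top"
    and Y_lim: "((\<lambda>m. fst (Y m)) \<longlongrightarrow> 1) at_top"
    using psi_limit_asymptotics(2)[of 1] psibar_limit_asymptotics(2)[of 1] unfolding X_def Y_def
    by (auto dest: tendsto_fst tendsto_snd)
  have "fst (X m) = 0" for m
    using X by (intro eq_limit_if_shift_invariant[OF _ X_lim(1)]) (metis fst_conv)
  moreover have "snd (X m) = 1" for m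
    using X \<open>\<And>m. fst (X m) = 0\<close> by (intro eq_limit_if_shift_invariant[OF _ X_lim(2)]) (metis snd_conv add_0_right mult_zero_right)
  ultimately show "gen_fun (psi.limit n) 1 = (0, 1)"
    by (simp add: X_def prod_eq_iff)
  have "fst (Y m) = 1" for m
    using Y by (intro eq_limit_if_shift_invariant[OF _ Y_lim]) (metis fst_conv)
  then show "fst (gen_fun (psibar.limit n) 1) = 1"
    and "snd (gen_fun (psibar.limit n) 1) = r n + snd (gen_fun (psibar.limit (n + 1)) 1)"
    using Y[of n] by (simp_all add: Y_def prod_eq_iff)
qed

lemma psi_limit_0: "psi.limit n 0 = (- q n * snd (psi.limit (n + 1) 0), (1 - q n * r n) * snd (psi.limit (n + 1) 0))"
  using psi.limit_eq_T_limit[of n] by (simp add: psi_step_def step_vec_def seq_shift_def algebra_simps)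

lemma psibar_limit_0:
  shows "psibar.limit n 0 = (fst (psibar.limit n 0), r n * fst (psibar.limit n 0))"
    and "fst (psibar.limit n 0) = (1 + q n * r (n + 1)) * fst (psibar.limit (n + 1) 0)"
proof -
  have eq: "psibar.limit m 0 = (fst (psibar.limit (m + 1) 0) + q m * snd (psibar.limit (m + 1) 0),
      r m * (fst (psibar.limit (m + 1) 0) + q m * snd (psibar.limit (m + 1) 0)))" for m
    using psibar.limit_eq_T_limit[of m] by (simp add: psibar_step_def step_vec_def seq_shift_def)
  have snd_eq: "snd (psibar.limit m 0) = r m * fst (psibar.limit m 0)" for m
    by (subst (1 2) eq) simp
  then show "psibar.limit n 0 = (fst (psibar.limit n 0), r n * fst (psibar.limit n 0))"
    by (simp add: prod_eq_iff)
  show "fst (psibar.limit n 0) = (1 + q n * r (n + 1)) * fst (psibar.limit (n + 1) 0)"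
    using eq[of n] snd_eq[of "n + 1"] by (simp add: algebra_simps)
qed

lemma leading_coeffs_nonzero:
  shows "(\<And>m. 1 - q m * r m \<noteq> 0) \<Longrightarrow> snd (psi.limit n 0) \<noteq> 0"
    and "(\<And>m. 1 + q m * r (m + 1) \<noteq> 0) \<Longrightarrow> fst (psibar.limit n 0) \<noteq> 0"
proof -
  have rec: "snd (psi.limit m 0) = (1 - q m * r m) * snd (psi.limit (m + 1) 0)" for m
    using psi_limit_0[of m] by (metis snd_conv)
  have lim: "((\<lambda>m. snd (psi.limit m 0)) \<longlongrightarrow> 1) at_top"
    using tendsto_snd[OF psi_limit_asymptotics(3)] by simp
  show "snd (psi.limit n 0) \<noteq> 0" if "\<And>m. 1 - q m * r m \<noteq> 0"
    by (rule nonzero_if_tendsto_1[OF lim rec that])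
  have lim_bar: "((\<lambda>m. fst (psibar.limit m 0)) \<longlongrightarrow> 1) at_top"
    using tendsto_fst[OF psibar_limit_asymptotics(3)] by simp
  show "fst (psibar.limit n 0) \<noteq> 0" if "\<And>m. 1 + q m * r (m + 1) \<noteq> 0"
    by (rule nonzero_if_tendsto_1[OF lim_bar psibar_limit_0(2) that])
qed

lemma tailsums_M_eq_solve2:
  fixes n :: int
  assumes psi: "\<And>m z. cmod z = 1 \<Longrightarrow> \<psi> m z = jost m z"
    and psibar: "\<And>m z. cmod z = 1 \<Longrightarrow> \<psi>b m z = jost_bar m z"
  defines "X \<equiv> solve2 (psibar.limit n 0) (psi.limit n 0) (gen_fun (psi.limit n) 1)"
    and "Y \<equiv> solve2 (psibar.limit n 0) (psi.limit n 0) (gen_fun (psibar.limit n) 1)"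
  shows "tailsum (\<lambda>l. fst (Mker \<psi> \<psi>b n l)) n = fst X" and "tailsum (\<lambda>l. snd (Mker \<psi> \<psi>b n l)) n = snd X"
    and "tailsum (\<lambda>l. fst (Mbker \<psi> \<psi>b n l)) n = fst Y" and "tailsum (\<lambda>l. snd (Mbker \<psi> \<psi>b n l)) n = snd Y"
proof -
  have K: "Kker \<psi> n (n + int j) = (if even j then psi.limit n (j div 2) else 0)"
    and Kb: "Kbker \<psi>b n (n + int j) = (if even j then psibar.limit n (j div 2) else 0)" for j
    by (rule Kker_eq_psi_coeff, rule psi, assumption) (rule Kbker_eq_psibar_coeff, rule psibar, assumption)
  have "(\<lambda>j. f (Kker \<psi> n (n + int j))) sums f (gen_fun (psi.limit n) 1)"
    and "(\<lambda>j. f (Kbker \<psi>b n (n + int j))) sums f (gen_fun (psibar.limit n) 1)" if "f = fst \<or> f = snd" for f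
  proof -
    have "(\<lambda>k. f (psi.limit n k)) sums f (gen_fun (psi.limit n) 1)"
      "(\<lambda>k. f (psibar.limit n k)) sums f (gen_fun (psibar.limit n) 1)"
      using that sums_gen_fun_1[OF psi_limit_asymptotics(1)] sums_gen_fun_1[OF psibar_limit_asymptotics(1)]
      by auto
    from this[THEN sums_even_spread] show "(\<lambda>j. f (Kker \<psi> n (n + int j))) sums f (gen_fun (psi.limit n) 1)"
      "(\<lambda>j. f (Kbker \<psi>b n (n + int j))) sums f (gen_fun (psibar.limit n) 1)"
      using that by (auto simp: K Kb if_distrib zero_prod_def cong: if_cong)
  qed
  note sums = this[of fst] this[of snd]
  have K0: "Kker \<psi> n n = psi.limit n 0" and Kb0: "Kbker \<psi>b n n = psibar.limit n 0"
    using K[of 0] Kb[of 0] by simp_all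
  show "tailsum (\<lambda>l. fst (Mker \<psi> \<psi>b n l)) n = fst X" "tailsum (\<lambda>l. snd (Mker \<psi> \<psi>b n l)) n = snd X"
    "tailsum (\<lambda>l. fst (Mbker \<psi> \<psi>b n l)) n = fst Y" "tailsum (\<lambda>l. snd (Mbker \<psi> \<psi>b n l)) n = snd Y"
    unfolding tailsum_def Mker_def Mbker_def K0 Kb0 X_def Y_def
    using solve2_sums[OF sums(1,3)] solve2_sums[OF sums(2,4)] by (simp_all add: sums_iff)
qed

end

theorem theorem6p3:
  fixes q r :: "int \<Rightarrow> complex"
    and \<psi> \<psi>b :: "int \<Rightarrow> complex \<Rightarrow> complex \<times> complex"
  assumes "rapidly_decreasing q" and "rapidly_decreasing r"
    and "\<And>n. 1 - q n * r n \<noteq> 0"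
    and "\<And>n. 1 + q n * r (n + 1) \<noteq> 0"
    and "\<And>z. cmod z = 1 \<Longrightarrow> solves_Q q r z (\<lambda>n. \<psi> n z) \<and> jost_psi_asym z (\<lambda>n. \<psi> n z)"
    and "\<And>z. cmod z = 1 \<Longrightarrow> solves_Q q r z (\<lambda>n. \<psi>b n z) \<and> jost_psibar_asym z (\<lambda>n. \<psi>b n z)"
  shows "(q n =
      (tailsum (\<lambda>l. fst (Mker \<psi> \<psi>b n l)) n * tailsum (\<lambda>k. snd (Mker \<psi> \<psi>b n k)) n) /
      (tailsum (\<lambda>l. fst (Mbker \<psi> \<psi>b n l)) n * tailsum (\<lambda>k. snd (Mker \<psi> \<psi>b n k)) n
       - tailsum (\<lambda>l. fst (Mker \<psi> \<psi>b n l)) n * tailsum (\<lambda>k. snd (Mbker \<psi> \<psi>b n k)) n)) \<and>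
    (r n =
      tailsum (\<lambda>l. snd (Mbker \<psi> \<psi>b (n - 1) l)) (n - 1) / tailsum (\<lambda>l. snd (Mker \<psi> \<psi>b (n - 1) l)) (n - 1)
      - tailsum (\<lambda>l. snd (Mbker \<psi> \<psi>b n l)) n / tailsum (\<lambda>l. snd (Mker \<psi> \<psi>b n l)) n)"
proof -
  obtain E where "\<And>m. step_defect (q m) (r m) \<le> E * sgn_step m"
    using step_defect_le_sgn_step[OF assms(1,2)] by blast
  then interpret inverse_square_potential q r E
    by unfold_locales
  have psi: "\<And>m z. cmod z = 1 \<Longrightarrow> \<psi> m z = jost m z"
    and psibar: "\<And>m z. cmod z = 1 \<Longrightarrow> \<psi>b m z = jost_bar m z"
    using jost_unique jost_bar_unique assms(5,6) by blast+
  define C b R where "C m = fst (psibar.limit m 0)" and "b m = snd (psi.limit (m + 1) 0)"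
    and "R m = snd (gen_fun (psibar.limit m) 1)" for m
  have at_1: "gen_fun (psi.limit m) 1 = (0, 1)" "gen_fun (psibar.limit m) 1 = (1, R m)" for m
    using gen_fun_limit_at_1(1,2) by (simp_all add: R_def prod_eq_iff)
  have lead: "psibar.limit m 0 = (C m, r m * C m)" "psi.limit m 0 = (- q m * b m, (1 - q m * r m) * b m)" for m
    unfolding C_def b_def using psibar_limit_0(1) psi_limit_0 .
  have nonzero: "C m \<noteq> 0" "b m \<noteq> 0" for m
    unfolding C_def b_def using leading_coeffs_nonzero assms(3,4) by blast+
  have "R (n - 1) = r (n - 1) + R n"
    using gen_fun_limit_at_1(3)[of "n - 1"] by (simp add: R_def)
  then show ?thesis
    using solve2_reconstruction[OF nonzero[of n], where q="q n" and r="r n" and R="R n"]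
      solve2_reconstruction(2)[OF nonzero[of "n - 1"], where q="q (n - 1)" and r="r (n - 1)" and R="R (n - 1)"]
    by (simp add: tailsums_M_eq_solve2[OF psi psibar] at_1 lead)
qed

end
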